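(* Let $w$ be a function on pairs $(T,S)$ of equal-size subsets of $[n]$ with values in $\mathbb{R}\cup\{-\infty\}$ satisfying properties (i)–(v) below, such that $F(S)=w(\{1,\dots,|S|\},S)$ is submodular. Then $w(j,k)\ge w(j+1,k)$ for all $j,k$ with $1\le j<n$ and $1\le k\le n$.
   Context: Notation: $w(i,j)=w(\{i\},\{j\})$; $Ss=S\cup\{s\}$; an interval is a set of consecutive integers. For $S,T\in\binom{[n]}{k}$, $T=\{t_1<\dots<t_k\}$, $S\preceq T$ means $|\{s\in S:s\le t_j\}|\ge j$ for all $j$; $S\prec T$ means $S\preceq T$, $S\ne T$. Properties: (i) $w(\{1,\dots,|S|\},S)\ne-\infty$ for all $S$. (ii) $w(T,S)=-\infty$ whenever $S\prec T$. (iii) For any interval $I$ with $\max(I)<\min(T\cup S)$, $w(I\cup T,I\cup S)=\sum_{i\in I}w(i,i)+w(T,S)$. (iv) If $t,s>\max(S\cup T)$ then $w(Tt,Ss)=w(T,S)+w(t,s)$. (v) For fixed $S$, $|S|=k$, and any $R$ with $|R|=k-2$ and distinct $a,b,c,d\notin R$, the maximum of $w(R\cup\{a,b\},S)+w(R\cup\{c,d\},S)$, $w(R\cup\{a,c\},S)+w(R\cup\{b,d\},S)$, $w(R\cup\{a,d\},S)+w(R\cup\{b,c\},S)$ is attained at least twice. Submodular: $F(A\cap B)+F(A\cup B)\le F(A)+F(B)$. *)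

theory Defs
  imports "HOL-Library.Extended_Real"
begin

text \<open>Gale order: for T = {t_1 < ... < t_k}, S \<preceq> T iff |{s\<in>S. s \<le> t_j}| \<ge> j for all j.\<close>
definition gale_le :: "nat set \<Rightarrow> nat set \<Rightarrow> bool" where
  "gale_le S T \<longleftrightarrow> card S = card T \<and>
     (\<forall>j\<in>{1..card T}. j \<le> card {s\<in>S. s \<le> sorted_list_of_set T ! (j - 1)})"

definition gale_less :: "nat set \<Rightarrow> nat set \<Rightarrow> bool" where
  "gale_less S T \<longleftrightarrow> gale_le S T \<and> S \<noteq> T"

definition max_attained_twice :: "ereal \<Rightarrow> ereal \<Rightarrow> ereal \<Rightarrow> bool" where
  "max_attained_twice x y z \<longleftrightarrow>
     (let m = max x (max y z) in (x = m \<and> y = m) \<or> (x = m \<and> z = m) \<or> (y = m \<and> z = m))"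

end

theory Submission
  imports Defs
begin

text \<open>If k \<le> j then w(j+1,k) = -\<infinity> by (ii). Otherwise submodularity of F on
  A = [j-1] \<union> {k} and B = [j], whose meet and join are [j-1] and [j] \<union> {k}, gives
  F([j-1]) + F([j] \<union> {k}) \<le> F([j-1] \<union> {k}) + F([j]); by (iv) the two values at sets
  containing k split as w([j-1],[j-1]) + w(j,k) and w([j],[j]) + w(j+1,k), and the
  diagonal terms are finite by (i), so they cancel.\<close>

lemma gale_less_singleton:
  assumes "k < t"
  shows "gale_less {k} {t}"
proof -
  have "{s \<in> {k}. s \<le> t} = {k}"
    using assms by auto
  then show ?thesis
    using assms unfolding gale_less_def gale_le_def by auto
qed

lemma atLeastAtMost_card_insert:
  assumes "m < k"
  shows "{1..card (insert k {1..m})} = insert (Suc m) {1..m}"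
  using assms by (auto simp: atLeastAtMostSuc_conv)

lemma initial_segment_exchange:
  fixes w :: "nat set \<Rightarrow> nat set \<Rightarrow> ereal"
  assumes diag_finite: "\<And>i. i \<le> n \<Longrightarrow> \<bar>w {1..i} {1..i}\<bar> \<noteq> \<infinity>"
    and split_top: "\<And>T S t s. T \<subseteq> {1..n} \<Longrightarrow> S \<subseteq> {1..n} \<Longrightarrow> card T = card S \<Longrightarrow>
                    t \<in> {1..n} \<Longrightarrow> s \<in> {1..n} \<Longrightarrow> (\<forall>x\<in>S \<union> T. x < t \<and> x < s) \<Longrightarrow>
                    w (insert t T) (insert s S) = w T S + w {t} {s}"
    and submod: "\<And>A B. A \<subseteq> {1..n} \<Longrightarrow> B \<subseteq> {1..n} \<Longrightarrow>
                    w {1..card (A \<inter> B)} (A \<inter> B) + w {1..card (A \<union> B)} (A \<union> B)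
                    \<le> w {1..card A} A + w {1..card B} B"
    and bounds: "1 \<le> j" "j < k" "k \<le> n"
  shows "w {Suc j} {k} \<le> w {j} {k}"
proof -
  obtain m where j_Suc: "j = Suc m"
    using \<open>1 \<le> j\<close> by (cases j) auto
  define P Q where "P = {1..m}" and "Q = {1..Suc m}"
  have Q: "Q = insert (Suc m) P"
    unfolding P_def Q_def by (simp add: atLeastAtMostSuc_conv)
  have sets: "insert k P \<inter> Q = P" "insert k P \<union> Q = insert k Q"
      "{1..card P} = P" "{1..card Q} = Q" "{1..card (insert k P)} = Q"
      "{1..card (insert k Q)} = insert (Suc j) Q"
    using bounds(1,2) j_Suc unfolding P_def Q_def by (auto simp: atLeastAtMost_card_insert)
  have "w P P + w (insert (Suc j) Q) (insert k Q) \<le> w Q (insert k P) + w Q Q"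
    using submod[of "insert k P" Q] bounds j_Suc unfolding sets by (auto simp: P_def Q_def)
  also have "w Q (insert k P) = w P P + w {j} {k}"
    unfolding Q j_Suc using bounds j_Suc by (intro split_top) (auto simp: P_def)
  also have "w (insert (Suc j) Q) (insert k Q) = w Q Q + w {Suc j} {k}"
    using bounds j_Suc by (intro split_top) (auto simp: Q_def)
  finally have le: "(w P P + w Q Q) + w {Suc j} {k} \<le> (w P P + w Q Q) + w {j} {k}"
    by (simp add: ac_simps)
  obtain r where "w P P + w Q Q = ereal r"
    using diag_finite[of m] diag_finite[of "Suc m"] bounds(2,3) j_Suc unfolding P_def Q_def
    by (cases "w {1..m} {1..m}"; cases "w {1..Suc m} {1..Suc m}") auto
  with le show ?thesis
    by (simp add: ereal_add_le_add_iff)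
qed

theorem lemma6p3:
  fixes n :: nat and w :: "nat set \<Rightarrow> nat set \<Rightarrow> ereal"
  assumes no_pinf: "\<And>T S. T \<subseteq> {1..n} \<Longrightarrow> S \<subseteq> {1..n} \<Longrightarrow> card T = card S \<Longrightarrow> w T S \<noteq> \<infinity>"
    and prop_i: "\<And>S. S \<subseteq> {1..n} \<Longrightarrow> w {1..card S} S \<noteq> -\<infinity>"
    and prop_ii: "\<And>T S. T \<subseteq> {1..n} \<Longrightarrow> S \<subseteq> {1..n} \<Longrightarrow> card T = card S \<Longrightarrow>
                    gale_less S T \<Longrightarrow> w T S = -\<infinity>"
    and prop_iii: "\<And>a b T S. T \<subseteq> {1..n} \<Longrightarrow> S \<subseteq> {1..n} \<Longrightarrow> card T = card S \<Longrightarrow>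
                    a \<le> b \<Longrightarrow> {a..b} \<subseteq> {1..n} \<Longrightarrow> (\<forall>x\<in>T \<union> S. b < x) \<Longrightarrow>
                    w ({a..b} \<union> T) ({a..b} \<union> S) = (\<Sum>i\<in>{a..b}. w {i} {i}) + w T S"
    and prop_iv: "\<And>T S t s. T \<subseteq> {1..n} \<Longrightarrow> S \<subseteq> {1..n} \<Longrightarrow> card T = card S \<Longrightarrow>
                    t \<in> {1..n} \<Longrightarrow> s \<in> {1..n} \<Longrightarrow> (\<forall>x\<in>S \<union> T. x < t \<and> x < s) \<Longrightarrow>
                    w (insert t T) (insert s S) = w T S + w {t} {s}"
    and prop_v: "\<And>S R a b c d. S \<subseteq> {1..n} \<Longrightarrow> card S \<ge> 2 \<Longrightarrow> R \<subseteq> {1..n} \<Longrightarrow>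
                    card R = card S - 2 \<Longrightarrow> {a, b, c, d} \<subseteq> {1..n} \<Longrightarrow>
                    distinct [a, b, c, d] \<Longrightarrow> {a, b, c, d} \<inter> R = {} \<Longrightarrow>
                    max_attained_twice
                      (w (R \<union> {a, b}) S + w (R \<union> {c, d}) S)
                      (w (R \<union> {a, c}) S + w (R \<union> {b, d}) S)
                      (w (R \<union> {a, d}) S + w (R \<union> {b, c}) S)"
    and submod: "\<And>A B. A \<subseteq> {1..n} \<Longrightarrow> B \<subseteq> {1..n} \<Longrightarrow>
                    w {1..card (A \<inter> B)} (A \<inter> B) + w {1..card (A \<union> B)} (A \<union> B)
                    \<le> w {1..card A} A + w {1..card B} B"
  shows "\<forall>j k. 1 \<le> j \<and> j < n \<and> 1 \<le> k \<and> k \<le> n \<longrightarrow> w {j} {k} \<ge> w {j + 1} {k}"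
proof (intro allI impI)
  fix j k
  assume jk: "1 \<le> j \<and> j < n \<and> 1 \<le> k \<and> k \<le> n"
  show "w {j + 1} {k} \<le> w {j} {k}"
  proof (cases "k \<le> j")
    case True
    then have "w {j + 1} {k} = -\<infinity>"
      using jk by (intro prop_ii) (auto intro: gale_less_singleton)
    then show ?thesis by simp
  next
    case False
    have diag_finite: "\<bar>w {1..i} {1..i}\<bar> \<noteq> \<infinity>" if "i \<le> n" for i
      using that prop_i[of "{1..i}"] no_pinf[of "{1..i}" "{1..i}"] by auto
    have "w {Suc j} {k} \<le> w {j} {k}"
      by (rule initial_segment_exchange[OF diag_finite prop_iv submod]) (use False jk in auto)
    then show ?thesis by simp
  qed
qed

end
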